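(* Consider the discrete-time system $$x(t+1)=A\,Z(x(t))+B\,u(t)+w(t),\qquad Z(x)=\begin{bmatrix}x\\ S(x)\end{bmatrix}\in\mathbb{R}^{n+N},$$ with unknown $A=[A_1\ \ A_2]$ ($A_1\in\mathbb{R}^{n\times n}$, $A_2\in\mathbb{R}^{n\times N}$), unknown $B\in\mathbb{R}^{n\times m}$, known differentiable $S:\mathbb{R}^n\to\mathbb{R}^N$ with $S(0)=0$, and disturbances satisfying $\|w(t)\|\le h_w$ for all $t$. Let $A_s=\frac{\partial S}{\partial x}(0)$, $Q(x)=S(x)-A_sx$, $\bar A_1=A_1+A_2A_s$; assume $(\bar A_1,B)$ is stabilizable and $Q$ is Lipschitz on the safe set $\mathcal{S}(F,g)=\{x: Fx\le g\}$ ($F\in\mathbb{R}^{s\times n}$, $g\in\mathbb{R}^s$), which is a polyhedral C-set. Let data $U_0,X_0,X_1,V_0$ be collected from this system (under unknown disturbances $W_0$), with $V_0$ of full row rank and $T\ge n+N+1$. Let $\lambda\in(0,1]$ and $\mathcal{W}_W=\{W\in\mathbb{R}^{n\times T}:\|W\|\le Th_w\}$. For $x\in\mathbb{R}^n$, $W\in\mathbb{R}^{n\times T}$, $w\in\mathbb{R}^n$ and $G_K=[G_{K,1}\ G_{K,2}]$ define $$\delta=X_1G_{K,2}Q(x)-W\big(G_{K,1}x+G_{K,2}Q(x)\big)+w.$$ Suppose there exist $G_K\in\mathbb{R}^{T\times(n+N)}$ and $P_s\in\mathbb{R}^{s\times s}$ such that $$P_sg\le\lambda g-l^{dw},\qquad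 P_sF=FX_1G_{K,1},\qquad V_0G_K=I,\qquad P_s\ge0,$$ where $l^{dw}=[l^{dw}_1,\dots,l^{dw}_s]^T$ with $$l^{dw}_i=\min_{G_{K,2}}\ \max_{x:\,Fx\le g}\ \max_{W\in\mathcal{W}_W}\ \max_{\|w\|\le h_w}\ F_i\,\delta,\quad i=1,\dots,s,$$ and the matrix $G_{K,2}$ in $G_K$ attains each of these minima. Then, with $K_1=U_0G_{K,1}$ and $K_2=U_0G_{K,2}$, the safe set $\mathcal{S}(F,g)$ is $\lambda$-contractive (and hence robustly invariant) for the closed-loop system under the controller $u(t)=K_1x(t)+K_2Q(x(t))$.
   Context: $\|\cdot\|$ is the infinity norm for vectors and the induced infinity norm (maximum absolute row sum) for matrices. Data: inputs $u(0),\dots,u(T-1)$ applied, states $x(0),\dots,x(T)$ recorded, unmeasured disturbances $w(0),\dots,w(T-1)$; $U_0=[u(0)\cdots u(T-1)]$, $X_0=[x(0)\cdots x(T-1)]$, $X_1=[x(1)\cdots x(T)]$, $W_0=[w(0)\cdots w(T-1)]$, $V_0=\begin{bmatrix}X_0\\ Q(X_0)\end{bmatrix}$ with $Q(X_0)=[Q(x(0))\cdots Q(x(T-1))]$; $G_{K,1}\in\mathbb{R}^{T\times n}$, $G_{K,2}\in\mathbb{R}^{T\times N}$. $F_i$ is the $i$-th row of $F$. Inequalities are elementwise; $P_s\ge0$ means entrywise nonnegative. A polyhedral C-set is a compact convex polyhedron containing the origin in its interior. The set $\mathcal{P}=\{x:Fx\le g\}$ is $\lambda$-contractive if $x(t)\in\mathcal{P}$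 implies $x(t+1)\in\{x:Fx\le\lambda g\}$ for all $t$ and all disturbances with $\|w(t)\|\le h_w$; robustly invariant if $x(0)\in\mathcal{P}$ implies $x(t)\in\mathcal{P}$ for all $t\ge0$ and all such disturbances. *)

theory Defs
  imports "HOL-Analysis.Analysis"
begin

definition vnorm_inf :: "real^'n \<Rightarrow> real" where
  "vnorm_inf x = Max (range (\<lambda>i. \<bar>x $ i\<bar>))"

definition mnorm_inf :: "real^'c^'r \<Rightarrow> real" where
  "mnorm_inf M = Max (range (\<lambda>i. \<Sum>j\<in>UNIV. \<bar>M $ i $ j\<bar>))"

definition schur_stable :: "real^'n^'n \<Rightarrow> bool" where
  "schur_stable M \<longleftrightarrow>
     (\<forall>(l::complex) (v::complex^'n). v \<noteq> 0 \<and> map_matrix complex_of_real M *v v = l *s v \<longrightarrow> cmod l < 1)"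

definition stabilizable :: "real^'n^'n \<Rightarrow> real^'m^'n \<Rightarrow> bool" where
  "stabilizable A B \<longleftrightarrow> (\<exists>K::real^'n^'m. schur_stable (A + B ** K))"

definition safe_set :: "real^'n^'s \<Rightarrow> real^'s \<Rightarrow> (real^'n) set" where
  "safe_set F g = {x. F *v x \<le> g}"

definition polyhedral_C_set :: "(real^'n) set \<Rightarrow> bool" where
  "polyhedral_C_set P \<longleftrightarrow> polyhedron P \<and> compact P \<and> convex P \<and> 0 \<in> interior P"

definition lambda_contractive ::
  "real^'n^'s \<Rightarrow> real^'s \<Rightarrow> real \<Rightarrow> real \<Rightarrow> (real^'n \<Rightarrow> real^'n) \<Rightarrow> bool" where
  "lambda_contractive F g lam hw f \<longleftrightarrow>
     (\<forall>(xs::nat \<Rightarrow> real^'n) (ws::nat \<Rightarrow> real^'n).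
        (\<forall>t. xs (Suc t) = f (xs t) + ws t \<and> vnorm_inf (ws t) \<le> hw) \<longrightarrow>
        (\<forall>t. F *v xs t \<le> g \<longrightarrow> F *v xs (Suc t) \<le> lam *\<^sub>R g))"

definition robustly_invariant ::
  "real^'n^'s \<Rightarrow> real^'s \<Rightarrow> real \<Rightarrow> (real^'n \<Rightarrow> real^'n) \<Rightarrow> bool" where
  "robustly_invariant F g hw f \<longleftrightarrow>
     (\<forall>(xs::nat \<Rightarrow> real^'n) (ws::nat \<Rightarrow> real^'n).
        (\<forall>t. xs (Suc t) = f (xs t) + ws t \<and> vnorm_inf (ws t) \<le> hw) \<longrightarrow>
        F *v xs 0 \<le> g \<longrightarrow> (\<forall>t. F *v xs t \<le> g))"

definition delta ::
  "real^'T^'n \<Rightarrow> real^'n^'T \<Rightarrow> real^'N^'T \<Rightarrow> (real^'n \<Rightarrow> real^'N)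
     \<Rightarrow> real^'n \<Rightarrow> real^'T^'n \<Rightarrow> real^'n \<Rightarrow> real^'n" where
  "delta X1 G1 G2 Q x W w = X1 *v (G2 *v Q x) - W *v (G1 *v x + G2 *v Q x) + w"

text \<open>The inner maxima  max_{x: Fx<=g} max_{W in W_W} max_{||w||<=hw} F_i delta,
  for a given G_{K,2}; W_W = {W. ||W|| <= T hw}.\<close>
definition ldw_obj ::
  "real^'n^'s \<Rightarrow> real^'s \<Rightarrow> real \<Rightarrow> real^'T^'n \<Rightarrow> real^'n^'T \<Rightarrow> (real^'n \<Rightarrow> real^'N)
     \<Rightarrow> 's \<Rightarrow> real^'N^'T \<Rightarrow> real" where
  "ldw_obj F g hw X1 G1 Q i G2 =
     Sup {(F *v delta X1 G1 G2 Q x W w) $ i | x W w.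
            F *v x \<le> g \<and> mnorm_inf W \<le> real CARD('T) * hw \<and> vnorm_inf w \<le> hw}"

end

theory Submission
  imports Defs
begin

text \<open>Substituting the data identity X1 = A1 X0 + A2 S(X0) + B U0 + W0, with S x = As x + Q x,
  into the closed loop and using the block form of V0 GK = I gives
  f(x) + w = X1 GK1 x + delta(x, W0, w).  The actual disturbance matrix W0 lies in W_W, so
  F_i delta <= ldw_i; this supremum is finite because the safe set is compact and Q is continuous
  on it.  Hence F (f(x) + w) = Ps F x + F delta <= Ps g + ldw <= lam g, using Ps >= 0.  As 0 lies
  in the safe set, g >= 0, so lam g <= g and contractivity gives invariance.  Stabilizability, the
  rank and length conditions on the data, the minimality of GK2 and the differentiability of S
  only make the design feasible; the conclusion does not use them.\<close>

lemma component_le_vnorm_inf: "\<bar>v $ j\<bar> \<le> vnorm_inf v"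
  unfolding vnorm_inf_def by (rule Max_ge) auto

lemma vnorm_inf_nonneg: "0 \<le> vnorm_inf v"
  using component_le_vnorm_inf[of v undefined] by linarith

lemma vnorm_inf_le_iff: "vnorm_inf v \<le> c \<longleftrightarrow> (\<forall>j. \<bar>v $ j\<bar> \<le> c)"
  unfolding vnorm_inf_def by (subst Max_le_iff) auto

lemma vnorm_inf_le_norm: "vnorm_inf v \<le> norm v"
  unfolding vnorm_inf_le_iff by (simp add: component_le_norm_cart)

lemma vnorm_inf_add_le: "vnorm_inf (a + b) \<le> vnorm_inf a + vnorm_inf b"
  unfolding vnorm_inf_le_iff using component_le_vnorm_inf[of a] component_le_vnorm_inf[of b]
  by (metis abs_triangle_ineq add_mono order_trans vector_add_component)

lemma vnorm_inf_diff_le: "vnorm_inf (a - b) \<le> vnorm_inf a + vnorm_inf b"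
  unfolding vnorm_inf_le_iff using component_le_vnorm_inf[of a] component_le_vnorm_inf[of b]
  by (metis abs_triangle_ineq4 add_mono order_trans vector_minus_component)

lemma mnorm_inf_nonneg: "0 \<le> mnorm_inf M"
  unfolding mnorm_inf_def
  by (rule order_trans[OF _ Max_ge[of _ "\<Sum>j\<in>UNIV. \<bar>M $ undefined $ j\<bar>"]]) (auto intro: sum_nonneg)

lemma vnorm_inf_matrix_vector_mult_le:
  "vnorm_inf ((M::real^'c^'r) *v v) \<le> mnorm_inf M * vnorm_inf v"
  unfolding vnorm_inf_le_iff
proof
  fix i
  have "\<bar>(M *v v) $ i\<bar> = \<bar>\<Sum>j\<in>UNIV. M $ i $ j * v $ j\<bar>"
    by (simp add: matrix_vector_mult_def)
  also have "\<dots> \<le> (\<Sum>j\<in>UNIV. \<bar>M $ i $ j\<bar> * vnorm_inf v)"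
    by (rule order_trans[OF sum_abs])
      (auto intro!: sum_mono mult_left_mono component_le_vnorm_inf simp: abs_mult)
  also have "\<dots> = (\<Sum>j\<in>UNIV. \<bar>M $ i $ j\<bar>) * vnorm_inf v"
    by (simp add: sum_distrib_right)
  also have "\<dots> \<le> mnorm_inf M * vnorm_inf v"
    unfolding mnorm_inf_def by (intro mult_right_mono Max_ge vnorm_inf_nonneg) auto
  finally show "\<bar>(M *v v) $ i\<bar> \<le> mnorm_inf M * vnorm_inf v" .
qed

lemma vnorm_inf_matrix_vector_mult_le_bound:
  "vnorm_inf v \<le> b \<Longrightarrow> vnorm_inf ((M::real^'c^'r) *v v) \<le> mnorm_inf M * b"
  by (rule order_trans[OF vnorm_inf_matrix_vector_mult_le]) (intro mult_left_mono mnorm_inf_nonneg)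

definition data_matrix :: "('T::finite \<Rightarrow> real^'k) \<Rightarrow> real^'T^'k" where
  "data_matrix h = (\<chi> i j. h j $ i)"

lemma data_matrix_mult_vector: "data_matrix h *v a = (\<Sum>j\<in>UNIV. a $ j *\<^sub>R h j)"
  by (simp add: data_matrix_def matrix_mult_sum column_def scalar_mult_eq_scaleR)

lemma matrix_vector_mult_sum: "(M::real^'c^'r) *v sum f I = (\<Sum>i\<in>I. M *v f i)"
  by (simp add: linear_sum[OF matrix_vector_mul_linear] o_def)

lemma data_matrix_linear_step:
  assumes "\<forall>j. y j = A *v x j + C *v q j + B *v u j + w j"
  shows "data_matrix y *v a = A *v (data_matrix x *v a) + C *v (data_matrix q *v a)
           + B *v (data_matrix u *v a) + data_matrix w *v a"
proof -
  have "data_matrix y *v a = (\<Sum>j\<in>UNIV. a $ j *\<^sub>R (A *v x j + C *v q j + B *v u j + w j))"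
    by (simp add: data_matrix_mult_vector assms)
  also have "\<dots> = A *v (\<Sum>j\<in>UNIV. a $ j *\<^sub>R x j) + C *v (\<Sum>j\<in>UNIV. a $ j *\<^sub>R q j)
      + B *v (\<Sum>j\<in>UNIV. a $ j *\<^sub>R u j) + (\<Sum>j\<in>UNIV. a $ j *\<^sub>R w j)"
    by (simp add: matrix_vector_mult_sum matrix_vector_mult_scaleR scaleR_right_distrib sum.distrib)
  finally show ?thesis by (simp only: data_matrix_mult_vector)
qed

lemma trajectory_data_identity:
  fixes tau :: "'T::finite \<Rightarrow> nat"
  assumes data: "\<forall>t<CARD('T). xd (Suc t) = A1 *v xd t + A2 *v S (xd t) + B *v ud t + wd t"
    and tau: "bij_betw tau UNIV {..<CARD('T)}"
  shows "data_matrix (\<lambda>j. xd (Suc (tau j))) *v a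
      = (A1 + A2 ** As) *v (data_matrix (\<lambda>j. xd (tau j)) *v a)
        + A2 *v (data_matrix (\<lambda>j. S (xd (tau j)) - As *v xd (tau j)) *v a)
        + B *v (data_matrix (\<lambda>j. ud (tau j)) *v a) + data_matrix (\<lambda>j. wd (tau j)) *v a"
proof (rule data_matrix_linear_step, intro allI)
  fix j
  have "tau j < CARD('T)"
    using tau by (auto simp: bij_betw_def)
  with data show "xd (Suc (tau j)) = (A1 + A2 ** As) *v xd (tau j)
      + A2 *v (S (xd (tau j)) - As *v xd (tau j)) + B *v ud (tau j) + wd (tau j)"
    by (simp add: matrix_vector_mult_add_rdistrib matrix_vector_mult_diff_distrib
        matrix_vector_mul_assoc)
qed

lemma mnorm_inf_data_matrix_le:
  fixes h :: "'T::finite \<Rightarrow> real^'k"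
  assumes "\<forall>j. vnorm_inf (h j) \<le> c"
  shows "mnorm_inf (data_matrix h) \<le> real CARD('T) * c"
  unfolding mnorm_inf_def
proof (subst Max_le_iff, safe)
  fix i
  have "\<bar>data_matrix h $ i $ j\<bar> \<le> c" for j
    using order_trans[OF component_le_vnorm_inf assms[rule_format, of j]]
    by (simp add: data_matrix_def)
  then have "(\<Sum>j\<in>UNIV. \<bar>data_matrix h $ i $ j\<bar>) \<le> (\<Sum>j\<in>(UNIV::'T set). c)"
    by (rule sum_mono)
  then show "(\<Sum>j\<in>UNIV. \<bar>data_matrix h $ i $ j\<bar>) \<le> real CARD('T) * c" by simp
qed auto

lemma stacked_right_inverse_blocks:
  fixes X :: "real^'T^'n" and Y :: "real^'T^'N" and G :: "real^('n + 'N)^'T"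
  assumes "(\<chi> r j. case r of Inl i \<Rightarrow> X $ i $ j | Inr k \<Rightarrow> Y $ k $ j) ** G = mat 1"
  shows "X ** (\<chi> t i. G $ t $ Inl i) = mat 1" "Y ** (\<chi> t i. G $ t $ Inl i) = 0"
    and "X ** (\<chi> t k. G $ t $ Inr k) = 0" "Y ** (\<chi> t k. G $ t $ Inr k) = mat 1"
proof -
  have entry: "(\<Sum>t\<in>UNIV. (case r of Inl i \<Rightarrow> X $ i $ t | Inr k \<Rightarrow> Y $ k $ t) * G $ t $ c)
      = (if r = c then 1 else 0)" for r c
    using assms[unfolded vec_eq_iff] by (simp add: mat_def matrix_matrix_mult_def)
  show "X ** (\<chi> t i. G $ t $ Inl i) = mat 1" "Y ** (\<chi> t i. G $ t $ Inl i) = 0"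
    "X ** (\<chi> t k. G $ t $ Inr k) = 0" "Y ** (\<chi> t k. G $ t $ Inr k) = mat 1"
    using entry[of "Inl _" "Inl _"] entry[of "Inr _" "Inl _"] entry[of "Inl _" "Inr _"]
      entry[of "Inr _" "Inr _"]
    by (simp_all add: vec_eq_iff mat_def matrix_matrix_mult_def)
qed

lemma closed_loop_data_representation:
  assumes data: "\<And>a. X1 *v a = Abar *v (X0 *v a) + A2 *v (QX0 *v a) + B *v (U0 *v a) + W0 *v a"
    and X0_G1: "X0 ** G1 = mat 1" and QX0_G1: "QX0 ** G1 = 0"
    and X0_G2: "X0 ** G2 = 0" and QX0_G2: "QX0 ** G2 = mat 1"
  shows "Abar *v x + A2 *v Q x + B *v ((U0 ** G1) *v x + (U0 ** G2) *v Q x) + w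
           = (X1 ** G1) *v x + delta X1 G1 G2 Q x W0 w"
proof -
  define a where "a = G1 *v x + G2 *v Q x"
  have "X0 *v a = x" "QX0 *v a = Q x"
    by (simp_all add: a_def matrix_vector_right_distrib matrix_vector_mul_assoc
        X0_G1 X0_G2 QX0_G1 QX0_G2)
  moreover have "U0 *v a = (U0 ** G1) *v x + (U0 ** G2) *v Q x"
    by (simp add: a_def matrix_vector_right_distrib matrix_vector_mul_assoc)
  ultimately have "Abar *v x + A2 *v Q x + B *v ((U0 ** G1) *v x + (U0 ** G2) *v Q x)
      = X1 *v a - W0 *v a"
    using data[of a] by simp
  moreover have "X1 *v a = (X1 ** G1) *v x + X1 *v (G2 *v Q x)"
    by (simp add: a_def matrix_vector_right_distrib matrix_vector_mul_assoc)
  ultimately show ?thesis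
    by (simp add: delta_def a_def algebra_simps)
qed

lemma vnorm_inf_delta_le:
  assumes "vnorm_inf x \<le> bx" "vnorm_inf (Q x) \<le> bq" "mnorm_inf W \<le> c" "vnorm_inf w \<le> hw"
  shows "vnorm_inf (delta X1 G1 G2 Q x W w)
           \<le> mnorm_inf X1 * (mnorm_inf G2 * bq) + c * (mnorm_inf G1 * bx + mnorm_inf G2 * bq) + hw"
proof -
  have G2Q: "vnorm_inf (G2 *v Q x) \<le> mnorm_inf G2 * bq"
    using assms(2) by (rule vnorm_inf_matrix_vector_mult_le_bound)
  have "vnorm_inf (G1 *v x + G2 *v Q x) \<le> mnorm_inf G1 * bx + mnorm_inf G2 * bq"
    using vnorm_inf_add_le[of "G1 *v x" "G2 *v Q x"] G2Q
      vnorm_inf_matrix_vector_mult_le_bound[OF assms(1), of G1] by linarith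
  then have "vnorm_inf (W *v (G1 *v x + G2 *v Q x)) \<le> c * (mnorm_inf G1 * bx + mnorm_inf G2 * bq)"
    using assms(3) mnorm_inf_nonneg[of W] vnorm_inf_nonneg
    by (intro order_trans[OF vnorm_inf_matrix_vector_mult_le] mult_mono) auto
  then show ?thesis
    unfolding delta_def
    using vnorm_inf_add_le[of "X1 *v (G2 *v Q x) - W *v (G1 *v x + G2 *v Q x)" w]
      vnorm_inf_diff_le[of "X1 *v (G2 *v Q x)" "W *v (G1 *v x + G2 *v Q x)"]
      vnorm_inf_matrix_vector_mult_le_bound[OF G2Q, of X1] assms(4)
    by linarith
qed

lemma ldw_obj_upper:
  fixes X1 :: "real^'T::finite^'n"
  assumes compact: "compact (safe_set F g)" and cont: "continuous_on (safe_set F g) Q"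
    and x: "F *v x \<le> g" and W: "mnorm_inf W \<le> real CARD('T) * hw" and w: "vnorm_inf w \<le> hw"
  shows "(F *v delta X1 G1 G2 Q x W w) $ i \<le> ldw_obj F g hw X1 G1 Q i G2"
proof -
  obtain bx where bx: "\<forall>x\<in>safe_set F g. norm x \<le> bx"
    using compact_imp_bounded[OF compact] unfolding bounded_iff by blast
  obtain bq where bq: "\<forall>x\<in>safe_set F g. norm (Q x) \<le> bq"
    using compact_imp_bounded[OF compact_continuous_image[OF cont compact]]
    unfolding bounded_iff by blast
  let ?bound = "mnorm_inf F * (mnorm_inf X1 * (mnorm_inf G2 * bq)
      + real CARD('T) * hw * (mnorm_inf G1 * bx + mnorm_inf G2 * bq) + hw)"
  let ?values = "{(F *v delta X1 G1 G2 Q x W w) $ i | x W w.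
      F *v x \<le> g \<and> mnorm_inf W \<le> real CARD('T) * hw \<and> vnorm_inf w \<le> hw}"
  have "y \<le> ?bound" if "y \<in> ?values" for y
  proof -
    obtain x' W' w' where y: "y = (F *v delta X1 G1 G2 Q x' W' w') $ i"
      and x': "x' \<in> safe_set F g" and W': "mnorm_inf W' \<le> real CARD('T) * hw"
      and w': "vnorm_inf w' \<le> hw"
      using \<open>y \<in> ?values\<close> by (auto simp: safe_set_def)
    have "vnorm_inf x' \<le> bx" "vnorm_inf (Q x') \<le> bq"
      using order_trans[OF vnorm_inf_le_norm bx[rule_format, OF x']]
        order_trans[OF vnorm_inf_le_norm bq[rule_format, OF x']] .
    then have "vnorm_inf (delta X1 G1 G2 Q x' W' w') \<le> mnorm_inf X1 * (mnorm_inf G2 * bq)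
        + real CARD('T) * hw * (mnorm_inf G1 * bx + mnorm_inf G2 * bq) + hw"
      using W' w' by (rule vnorm_inf_delta_le)
    then have "vnorm_inf (F *v delta X1 G1 G2 Q x' W' w') \<le> ?bound"
      by (rule vnorm_inf_matrix_vector_mult_le_bound)
    then show "y \<le> ?bound"
      unfolding y by (rule order_trans[OF order_trans[OF abs_ge_self component_le_vnorm_inf]])
  qed
  then have "bdd_above ?values" by (rule bdd_aboveI)
  moreover have "(F *v delta X1 G1 G2 Q x W w) $ i \<in> ?values" using x W w by blast
  ultimately show ?thesis unfolding ldw_obj_def by (rule cSup_upper[rotated])
qed

lemma matrix_vector_mult_mono_nonneg:
  assumes "\<forall>i j. 0 \<le> (P::real^'c^'r) $ i $ j" "y \<le> z"
  shows "P *v y \<le> P *v z"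
  using assms unfolding less_eq_vec_def matrix_vector_mult_def
  by (auto intro!: sum_mono mult_left_mono)

lemma polyhedral_contraction_step:
  fixes Ps :: "real^'s^'s" and F :: "real^'n^'s"
  assumes PsF: "Ps ** F = F ** M" and Ps_nonneg: "\<forall>i j. 0 \<le> Ps $ i $ j"
    and Ps_g: "Ps *v g \<le> lam *\<^sub>R g - l"
    and x: "F *v x \<le> g" and d: "F *v d \<le> l"
  shows "F *v (M *v x + d) \<le> lam *\<^sub>R g"
proof -
  have split: "F *v (M *v x + d) = Ps *v (F *v x) + F *v d"
    by (simp add: matrix_vector_right_distrib matrix_vector_mul_assoc PsF)
  have Ps_mono: "Ps *v (F *v x) \<le> Ps *v g"
    using Ps_nonneg x by (rule matrix_vector_mult_mono_nonneg)
  show ?thesis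
    unfolding less_eq_vec_def
  proof
    fix i
    have "(Ps *v (F *v x)) $ i \<le> (Ps *v g) $ i" "(Ps *v g) $ i \<le> lam * g $ i - l $ i"
      "(F *v d) $ i \<le> l $ i"
      using Ps_mono Ps_g d by (simp_all add: less_eq_vec_def)
    then show "(F *v (M *v x + d)) $ i \<le> (lam *\<^sub>R g) $ i"
      unfolding split by simp
  qed
qed

lemma lambda_contractiveI:
  assumes "\<And>x w. F *v x \<le> g \<Longrightarrow> vnorm_inf w \<le> hw \<Longrightarrow> F *v (f x + w) \<le> lam *\<^sub>R g"
  shows "lambda_contractive F g lam hw f"
  unfolding lambda_contractive_def
proof (intro allI impI)
  fix xs ws t
  assume "\<forall>t. xs (Suc t) = f (xs t) + ws t \<and> vnorm_inf (ws t) \<le> hw" and "F *v xs t \<le> g"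
  then show "F *v xs (Suc t) \<le> lam *\<^sub>R g" by (simp add: assms)
qed

lemma lambda_contractive_imp_robustly_invariant:
  assumes contr: "lambda_contractive F g lam hw f" and "0 \<le> g" "lam \<le> 1"
  shows "robustly_invariant F g hw f"
  unfolding robustly_invariant_def
proof (intro allI impI)
  fix xs ws t
  assume traj: "\<forall>t. xs (Suc t) = f (xs t) + ws t \<and> vnorm_inf (ws t) \<le> hw"
    and init: "F *v xs 0 \<le> g"
  have "lam *\<^sub>R g \<le> g"
    using \<open>0 \<le> g\<close> \<open>lam \<le> 1\<close> mult_right_mono[of lam 1] unfolding less_eq_vec_def by simp
  show "F *v xs t \<le> g"
  proof (induction t)
    case 0
    show ?case by (rule init)
  next
    case (Suc t)
    then have "F *v xs (Suc t) \<le> lam *\<^sub>R g"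
      by (rule contr[unfolded lambda_contractive_def, rule_format, of xs ws, OF traj[rule_format]])
    then show ?case using \<open>lam *\<^sub>R g \<le> g\<close> by (rule order_trans)
  qed
qed

lemma polyhedral_C_set_safe_set_nonneg:
  assumes "polyhedral_C_set (safe_set F g)"
  shows "0 \<le> g"
proof -
  have "0 \<in> safe_set F g"
    using assms interior_subset unfolding polyhedral_C_set_def by blast
  then show ?thesis by (simp add: safe_set_def)
qed

theorem corollary1:
  fixes A1 :: "real^'n^'n" and A2 :: "real^'N^'n" and B :: "real^'m^'n"
    and S :: "real^'n \<Rightarrow> real^'N" and As :: "real^'n^'N"
    and hw :: real and F :: "real^'n^'s" and g :: "real^'s"
    and xd :: "nat \<Rightarrow> real^'n" and ud :: "nat \<Rightarrow> real^'m" and wd :: "nat \<Rightarrow> real^'n"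
    and tau :: "'T::finite \<Rightarrow> nat"
    and lam :: real and GK :: "real^('n + 'N)^'T" and Ps :: "real^'s^'s" and ldw :: "real^'s"
    and Q :: "real^'n \<Rightarrow> real^'N"
    and X0 X1 :: "real^'T^'n" and U0 :: "real^'T^'m" and QX0 :: "real^'T^'N"
    and V0 :: "real^'T^('n + 'N)"
    and GK1 :: "real^'n^'T" and GK2 :: "real^'N^'T" and K1 :: "real^'n^'m" and K2 :: "real^'N^'m"
  assumes S_diff: "(S has_derivative (\<lambda>h. As *v h)) (at 0)"
    and S_diff_all: "\<forall>x. S differentiable (at x)"
    and S0: "S 0 = 0"
  defines "Q \<equiv> (\<lambda>x. S x - As *v x)"
  assumes stab: "stabilizable (A1 + A2 ** As) B"
    and lip: "\<exists>L. L-lipschitz_on (safe_set F g) Q"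
    and Cset: "polyhedral_C_set (safe_set F g)"
    and tau: "bij_betw tau UNIV {..<CARD('T)}"
    and data: "\<forall>t<CARD('T). xd (Suc t) = A1 *v xd t + A2 *v S (xd t) + B *v ud t + wd t"
    and wbound: "\<forall>t<CARD('T). vnorm_inf (wd t) \<le> hw"
  defines "X0 \<equiv> (\<chi> i j. xd (tau j) $ i)"
    and "X1 \<equiv> (\<chi> i j. xd (Suc (tau j)) $ i)"
    and "U0 \<equiv> (\<chi> i j. ud (tau j) $ i)"
    and "QX0 \<equiv> (\<chi> i j. Q (xd (tau j)) $ i)"
    and "V0 \<equiv> (\<chi> r j. case r of Inl i \<Rightarrow> X0 $ i $ j | Inr k \<Rightarrow> QX0 $ k $ j)"
  assumes rankV0: "rank V0 = CARD('n + 'N)"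
    and Tbig: "CARD('T) \<ge> CARD('n) + CARD('N) + 1"
    and lam: "0 < lam" "lam \<le> 1"
  defines "GK1 \<equiv> (\<chi> t i. GK $ t $ Inl i)"
    and "GK2 \<equiv> (\<chi> t k. GK $ t $ Inr k)"
  assumes ldw_def: "\<forall>i. ldw $ i = ldw_obj F g hw X1 GK1 Q i GK2"
    and ldw_min: "\<forall>i (G2::real^'N^'T). ldw_obj F g hw X1 GK1 Q i GK2 \<le> ldw_obj F g hw X1 GK1 Q i G2"
    and c1: "Ps *v g \<le> lam *\<^sub>R g - ldw"
    and c2: "Ps ** F = F ** X1 ** GK1"
    and c3: "V0 ** GK = mat 1"
    and c4: "\<forall>i j. 0 \<le> Ps $ i $ j"
  defines "K1 \<equiv> U0 ** GK1" and "K2 \<equiv> U0 ** GK2"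
  shows "lambda_contractive F g lam hw
           (\<lambda>x. A1 *v x + A2 *v S x + B *v (K1 *v x + K2 *v Q x))
       \<and> robustly_invariant F g hw
           (\<lambda>x. A1 *v x + A2 *v S x + B *v (K1 *v x + K2 *v Q x))"
proof -
  define f where "f = (\<lambda>x. A1 *v x + A2 *v S x + B *v (K1 *v x + K2 *v Q x))"
  define W0 where "W0 = data_matrix (\<lambda>j. wd (tau j))"
  have data_matrices:
    "X1 = data_matrix (\<lambda>j. xd (Suc (tau j)))" "X0 = data_matrix (\<lambda>j. xd (tau j))"
    "QX0 = data_matrix (\<lambda>j. Q (xd (tau j)))" "U0 = data_matrix (\<lambda>j. ud (tau j))"
    by (simp_all add: X1_def X0_def QX0_def U0_def data_matrix_def)
  have data_identity: "X1 *v a = (A1 + A2 ** As) *v (X0 *v a) + A2 *v (QX0 *v a)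
      + B *v (U0 *v a) + W0 *v a" for a
    unfolding data_matrices W0_def Q_def by (rule trajectory_data_identity[OF data tau])
  have f_data:
    "f x = (A1 + A2 ** As) *v x + A2 *v Q x + B *v ((U0 ** GK1) *v x + (U0 ** GK2) *v Q x)" for x
    by (simp add: f_def K1_def K2_def Q_def algebra_simps matrix_vector_mul_assoc)
  have closed_loop: "f x + w = (X1 ** GK1) *v x + delta X1 GK1 GK2 Q x W0 w" for x w
    unfolding f_data
    by (rule closed_loop_data_representation[OF data_identity
          stacked_right_inverse_blocks[OF c3[unfolded V0_def], folded GK1_def GK2_def]])
  have W0: "mnorm_inf W0 \<le> real CARD('T) * hw"
    unfolding W0_def using wbound tau
    by (intro mnorm_inf_data_matrix_le) (auto simp: bij_betw_def)
  have compact: "compact (safe_set F g)" and cont: "continuous_on (safe_set F g) Q"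
    using Cset lip lipschitz_on_continuous_on unfolding polyhedral_C_set_def by blast+
  have delta_le_ldw: "F *v delta X1 GK1 GK2 Q x W0 w \<le> ldw"
    if "F *v x \<le> g" "vnorm_inf w \<le> hw" for x w
    using ldw_obj_upper[OF compact cont that(1) W0 that(2)] ldw_def by (simp add: less_eq_vec_def)
  have "lambda_contractive F g lam hw f"
  proof (rule lambda_contractiveI)
    fix x w :: "real^'n"
    assume "F *v x \<le> g" "vnorm_inf w \<le> hw"
    then show "F *v (f x + w) \<le> lam *\<^sub>R g"
      unfolding closed_loop
      by (intro polyhedral_contraction_step[OF c2[folded matrix_mul_assoc] c4 c1] delta_le_ldw)
  qed
  moreover from this polyhedral_C_set_safe_set_nonneg[OF Cset] lam(2)
  have "robustly_invariant F g hw f" by (rule lambda_contractive_imp_robustly_invariant)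
  ultimately show ?thesis unfolding f_def ..
qed

end
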